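(* Let $(\gamma,v_1,v_2):I\to H^3\times\Delta_5$ be a hyperbolic framed curve with $a^2+b^2\neq0$ and $M^2>A^2$ on $I$, and let $\mathcal{F}^d$ be its de Sitter focal surface. Let $t_0\in I$. If $(MA'-AM',N)(t_0)=(0,0)$, then every point $(t_0,\theta)$ is a singular point of $\mathcal{F}^d$. If $(MA'-AM',N)(t_0)\neq(0,0)$, then there exists a singular point of $\mathcal{F}^d$ of the form $(t_0,\theta_0)$.
   Context: $\mathbb{R}^4_1$ denotes $\mathbb{R}^4$ with $\langle x,y\rangle=-x_0y_0+x_1y_1+x_2y_2+x_3y_3$; $H^3=\{x:\langle x,x\rangle=-1\}$, $S^3_1=\{x:\langle x,x\rangle=1\}$. For $x^1,x^2,x^3\in\mathbb{R}^4_1$, $x^1\wedge x^2\wedge x^3$ is the vector given by the formal determinant with first row $(-e_0,e_1,e_2,e_3)$ and the components of $x^1,x^2,x^3$ as remaining rows. Let $\Delta_5=\{(v_1,v_2)\in S^3_1\times S^3_1:\langle v_1,v_2\rangle=0\}$. A hyperbolic framed curve is a smooth map $(\gamma,v_1,v_2):I\to H^3\times\Delta_5$ with $\langle\gamma,v_i\rangle=\langle\gamma',v_i\rangle=0$. Put $\mu=\gamma\wedge v_1\wedge v_2$; then $\gamma'=m\mu$, $v_1'=nv_2+a\mu$, $v_2'=-nv_1+b\mu$, $\mu'=m\gamma-av_1-bv_2$ with $m=\langle\gamma',\mu\rangle$, $n=\langle v_1',v_2\rangle$, $a=\langle v_1',\mu\rangle$, $b=\langle v_2',\mu\rangle$.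 Put $f=ab'-a'b+n(a^2+b^2)$. With $a^2+b^2\neq0$, the Frenet type frame is $n_1=(av_1+bv_2)/\sqrt{a^2+b^2}$, $n_2=(-bv_1+av_2)/\sqrt{a^2+b^2}$, giving $\gamma'=M\mu$, $n_1'=Nn_2+A\mu$, $n_2'=-Nn_1$, $\mu'=M\gamma-An_1$ with $M=m$, $N=f/(a^2+b^2)$, $A=\sqrt{a^2+b^2}$. The de Sitter focal surface ($M^2>A^2$) is $\mathcal{F}^d:I\times[0,2\pi]\to S^3_1$, $\mathcal{F}^d(t,\theta)=\frac{\cos\theta}{\sqrt{M^2-A^2}}(A\gamma-Mn_1)+\sin\theta\,n_2$. A singular point is a point where $d\mathcal{F}^d$ has rank $<2$; the singular set is the zero set of $\lambda^d=\det(\mathcal{F}^d,\mathcal{F}^d_t,\mathcal{F}^d_\theta,\mu)=\frac{\cos\theta(MA'-AM')-\sin\theta\,AN\sqrt{M^2-A^2}}{M^2-A^2}$. *)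

theory Defs
  imports "HOL-Analysis.Analysis"
begin

definition lor :: "real^4 \<Rightarrow> real^4 \<Rightarrow> real" where
  "lor x y = - x$0 * y$0 + x$1 * y$1 + x$2 * y$2 + x$3 * y$3"

definition det3 :: "real \<Rightarrow> real \<Rightarrow> real \<Rightarrow> real \<Rightarrow> real \<Rightarrow> real \<Rightarrow> real \<Rightarrow> real \<Rightarrow> real \<Rightarrow> real" where
  "det3 a1 a2 a3 b1 b2 b3 c1 c2 c3 =
     a1 * (b2 * c3 - b3 * c2) - a2 * (b1 * c3 - b3 * c1) + a3 * (b1 * c2 - b2 * c1)"

text \<open>Wedge product: cofactor expansion of the formal determinant with first row
  (-e0, e1, e2, e3) along the first row. With D_j the minor obtained by deleting
  column j, the determinant is -e0 D0 - e1 D1 + e2 D2 - e3 D3.\<close>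
definition wedge :: "real^4 \<Rightarrow> real^4 \<Rightarrow> real^4 \<Rightarrow> real^4" where
  "wedge x y z = (\<chi> i.
     if i = 0 then - det3 (x$1) (x$2) (x$3) (y$1) (y$2) (y$3) (z$1) (z$2) (z$3)
     else if i = 1 then - det3 (x$0) (x$2) (x$3) (y$0) (y$2) (y$3) (z$0) (z$2) (z$3)
     else if i = 2 then det3 (x$0) (x$1) (x$3) (y$0) (y$1) (y$3) (z$0) (z$1) (z$3)
     else - det3 (x$0) (x$1) (x$2) (y$0) (y$1) (y$2) (z$0) (z$1) (z$2))"

definition H3 :: "(real^4) set" where "H3 = {x. lor x x = -1}"
definition S31 :: "(real^4) set" where "S31 = {x. lor x x = 1}"
definition Delta5 :: "((real^4) \<times> (real^4)) set" where
  "Delta5 = {(u, w). u \<in> S31 \<and> w \<in> S31 \<and> lor u w = 0}"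

definition vd :: "(real \<Rightarrow> real^4) \<Rightarrow> real \<Rightarrow> real^4" where
  "vd f t = vector_derivative f (at t)"

definition smooth_on :: "real set \<Rightarrow> (real \<Rightarrow> real^4) \<Rightarrow> bool" where
  "smooth_on I f \<longleftrightarrow> (\<forall>k. \<forall>t\<in>I. ((vd ^^ k) f) differentiable (at t))"

definition hyp_framed_curve ::
  "real set \<Rightarrow> (real \<Rightarrow> real^4) \<Rightarrow> (real \<Rightarrow> real^4) \<Rightarrow> (real \<Rightarrow> real^4) \<Rightarrow> bool" where
  "hyp_framed_curve I \<gamma> v1 v2 \<longleftrightarrow>
     smooth_on I \<gamma> \<and> smooth_on I v1 \<and> smooth_on I v2 \<and>
     (\<forall>t\<in>I. \<gamma> t \<in> H3 \<and> (v1 t, v2 t) \<in> Delta5 \<and>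
        lor (\<gamma> t) (v1 t) = 0 \<and> lor (\<gamma> t) (v2 t) = 0 \<and>
        lor (vd \<gamma> t) (v1 t) = 0 \<and> lor (vd \<gamma> t) (v2 t) = 0)"

definition mu :: "(real \<Rightarrow> real^4) \<Rightarrow> (real \<Rightarrow> real^4) \<Rightarrow> (real \<Rightarrow> real^4) \<Rightarrow> real \<Rightarrow> real^4" where
  "mu \<gamma> v1 v2 t = wedge (\<gamma> t) (v1 t) (v2 t)"

definition cm :: "(real \<Rightarrow> real^4) \<Rightarrow> (real \<Rightarrow> real^4) \<Rightarrow> (real \<Rightarrow> real^4) \<Rightarrow> real \<Rightarrow> real" where
  "cm \<gamma> v1 v2 t = lor (vd \<gamma> t) (mu \<gamma> v1 v2 t)"
definition cn :: "(real \<Rightarrow> real^4) \<Rightarrow> (real \<Rightarrow> real^4) \<Rightarrow> (real \<Rightarrow> real^4) \<Rightarrow> real \<Rightarrow> real" where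
  "cn \<gamma> v1 v2 t = lor (vd v1 t) (v2 t)"
definition ca :: "(real \<Rightarrow> real^4) \<Rightarrow> (real \<Rightarrow> real^4) \<Rightarrow> (real \<Rightarrow> real^4) \<Rightarrow> real \<Rightarrow> real" where
  "ca \<gamma> v1 v2 t = lor (vd v1 t) (mu \<gamma> v1 v2 t)"
definition cb :: "(real \<Rightarrow> real^4) \<Rightarrow> (real \<Rightarrow> real^4) \<Rightarrow> (real \<Rightarrow> real^4) \<Rightarrow> real \<Rightarrow> real" where
  "cb \<gamma> v1 v2 t = lor (vd v2 t) (mu \<gamma> v1 v2 t)"

definition cf :: "(real \<Rightarrow> real^4) \<Rightarrow> (real \<Rightarrow> real^4) \<Rightarrow> (real \<Rightarrow> real^4) \<Rightarrow> real \<Rightarrow> real" where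
  "cf \<gamma> v1 v2 t =
     ca \<gamma> v1 v2 t * deriv (cb \<gamma> v1 v2) t - deriv (ca \<gamma> v1 v2) t * cb \<gamma> v1 v2 t
     + cn \<gamma> v1 v2 t * ((ca \<gamma> v1 v2 t)\<^sup>2 + (cb \<gamma> v1 v2 t)\<^sup>2)"

definition cM :: "(real \<Rightarrow> real^4) \<Rightarrow> (real \<Rightarrow> real^4) \<Rightarrow> (real \<Rightarrow> real^4) \<Rightarrow> real \<Rightarrow> real" where
  "cM \<gamma> v1 v2 t = cm \<gamma> v1 v2 t"
definition cN :: "(real \<Rightarrow> real^4) \<Rightarrow> (real \<Rightarrow> real^4) \<Rightarrow> (real \<Rightarrow> real^4) \<Rightarrow> real \<Rightarrow> real" where
  "cN \<gamma> v1 v2 t = cf \<gamma> v1 v2 t / ((ca \<gamma> v1 v2 t)\<^sup>2 + (cb \<gamma> v1 v2 t)\<^sup>2)"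
definition cA :: "(real \<Rightarrow> real^4) \<Rightarrow> (real \<Rightarrow> real^4) \<Rightarrow> (real \<Rightarrow> real^4) \<Rightarrow> real \<Rightarrow> real" where
  "cA \<gamma> v1 v2 t = sqrt ((ca \<gamma> v1 v2 t)\<^sup>2 + (cb \<gamma> v1 v2 t)\<^sup>2)"

definition fn1 :: "(real \<Rightarrow> real^4) \<Rightarrow> (real \<Rightarrow> real^4) \<Rightarrow> (real \<Rightarrow> real^4) \<Rightarrow> real \<Rightarrow> real^4" where
  "fn1 \<gamma> v1 v2 t = (1 / cA \<gamma> v1 v2 t) *\<^sub>R (ca \<gamma> v1 v2 t *\<^sub>R v1 t + cb \<gamma> v1 v2 t *\<^sub>R v2 t)"
definition fn2 :: "(real \<Rightarrow> real^4) \<Rightarrow> (real \<Rightarrow> real^4) \<Rightarrow> (real \<Rightarrow> real^4) \<Rightarrow> real \<Rightarrow> real^4" where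
  "fn2 \<gamma> v1 v2 t = (1 / cA \<gamma> v1 v2 t) *\<^sub>R (- cb \<gamma> v1 v2 t *\<^sub>R v1 t + ca \<gamma> v1 v2 t *\<^sub>R v2 t)"

definition focal_dS :: "(real \<Rightarrow> real^4) \<Rightarrow> (real \<Rightarrow> real^4) \<Rightarrow> (real \<Rightarrow> real^4) \<Rightarrow> real \<times> real \<Rightarrow> real^4" where
  "focal_dS \<gamma> v1 v2 = (\<lambda>(t, \<theta>).
     (cos \<theta> / sqrt ((cM \<gamma> v1 v2 t)\<^sup>2 - (cA \<gamma> v1 v2 t)\<^sup>2)) *\<^sub>R
        (cA \<gamma> v1 v2 t *\<^sub>R \<gamma> t - cM \<gamma> v1 v2 t *\<^sub>R fn1 \<gamma> v1 v2 t)
     + sin \<theta> *\<^sub>R fn2 \<gamma> v1 v2 t)"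

text \<open>(t,\<theta>) is a singular point of a map F of two variables if its differential,
  whose columns are the partial derivatives F_t and F_\<theta>, has rank < 2,
  i.e. the two partial derivatives are linearly dependent.\<close>
definition singular_point :: "(real \<times> real \<Rightarrow> real^4) \<Rightarrow> real \<times> real \<Rightarrow> bool" where
  "singular_point F p \<longleftrightarrow>
     (let Ft = vector_derivative (\<lambda>s. F (s, snd p)) (at (fst p));
          F\<theta> = vector_derivative (\<lambda>\<phi>. F (fst p, \<phi>)) (at (snd p))
      in \<exists>c1 c2. (c1, c2) \<noteq> (0, 0) \<and> c1 *\<^sub>R Ft + c2 *\<^sub>R F\<theta> = 0)"

end

(*
  Along the curve the frame (\<gamma>, n1, n2, \<mu>) obeys \<gamma>' = M \<mu>, n1' = N n2 + A \<mu>, n2' = -N n1.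
  Differentiating the focal surface, the \<mu>-components cancel and, with r = sqrt (M\<^sup>2 - A\<^sup>2),
    F\<^sub>t + (M N / r) F\<^sub>\<theta>  is a multiple of  cos \<theta> (M A' - A M') - sin \<theta> A N r
  along \<gamma> and n1. So (t, \<theta>) is singular as soon as cos \<theta> (M A' - A M') = sin \<theta> A N r.
  If M A' - A M' = N = 0 this holds for every \<theta>; otherwise it is a single linear equation in
  (cos \<theta>, sin \<theta>), which always has a solution in [0, 2\<pi>].
*)

theory Submission
  imports Defs
begin

lemma lor_commute: "lor x y = lor y x"
  unfolding lor_def by simp

lemma exhaust_4_zero: "(i::4) = 0 \<or> i = 1 \<or> i = 2 \<or> i = 3"
  using exhaust_4[of i] by auto

lemma forall_4_zero: "(\<forall>i::4. P i) \<longleftrightarrow> P 0 \<and> P 1 \<and> P 2 \<and> P 3"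
  using exhaust_4_zero by metis

lemma lor_frame_expansion:
  fixes x y z u :: "real^4"
  assumes "lor x x = -1" "lor y y = 1" "lor z z = 1" "lor x y = 0" "lor x z = 0" "lor y z = 0"
  shows "u = - lor u x *\<^sub>R x + lor u y *\<^sub>R y + lor u z *\<^sub>R z + lor u (wedge x y z) *\<^sub>R wedge x y z"
  unfolding vec_eq_iff forall_4_zero
  using assms unfolding lor_def wedge_def det3_def
  by (intro conjI) (simp; algebra)+

lemma differentiable_vec_nth:
  "f differentiable F \<Longrightarrow> (\<lambda>s. f s $ i) differentiable F"
  unfolding differentiable_def by (blast intro: bounded_linear.has_derivative[OF bounded_linear_vec_nth])

lemma differentiable_componentwise:
  fixes f :: "'a::real_normed_vector \<Rightarrow> real^'n"
  assumes "\<And>i. (\<lambda>s. f s $ i) differentiable (at t within S)"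
  shows "f differentiable (at t within S)"
proof -
  have "(\<lambda>s. \<Sum>i\<in>UNIV. f s $ i *\<^sub>R axis i (1::real)) differentiable (at t within S)"
    by (auto intro!: differentiable_sum differentiable_scaleR assms)
  moreover have "(\<lambda>s. \<Sum>i\<in>UNIV. f s $ i *\<^sub>R axis i 1) = f"
    using basis_expansion[of "f s" for s] by (simp add: scalar_mult_eq_scaleR)
  ultimately show ?thesis
    by (simp only:)
qed

lemma wedge_differentiable:
  fixes f g h :: "'a::real_normed_vector \<Rightarrow> real^4"
  assumes "f differentiable (at t within S)" "g differentiable (at t within S)"
    "h differentiable (at t within S)"
  shows "(\<lambda>s. wedge (f s) (g s) (h s)) differentiable (at t within S)"
proof (rule differentiable_componentwise)
  fix i :: 4
  have "(\<lambda>s. f s $ j) differentiable (at t within S)" "(\<lambda>s. g s $ j) differentiable (at t within S)"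
    "(\<lambda>s. h s $ j) differentiable (at t within S)" for j
    using assms by (simp_all add: differentiable_vec_nth)
  then show "(\<lambda>s. wedge (f s) (g s) (h s) $ i) differentiable (at t within S)"
    using exhaust_4[of i] unfolding wedge_def det3_def by (elim disjE) (simp_all add: derivative_intros)
qed

lemma has_real_derivative_lor:
  assumes "(f has_vector_derivative f') (at t within S)" "(g has_vector_derivative g') (at t within S)"
  shows "((\<lambda>s. lor (f s) (g s)) has_real_derivative lor f' (g t) + lor (f t) g') (at t within S)"
proof -
  have "((\<lambda>s. f s $ i) has_real_derivative f' $ i) (at t within S)"
    "((\<lambda>s. g s $ i) has_real_derivative g' $ i) (at t within S)" for i
    using assms bounded_linear.has_vector_derivative[OF bounded_linear_vec_nth]
    by (simp_all add: has_real_derivative_iff_has_vector_derivative)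
  then show ?thesis
    unfolding lor_def by (auto intro!: derivative_eq_intros simp: algebra_simps)
qed

lemma lor_differentiable:
  assumes "f differentiable (at t within S)" "g differentiable (at t within S)"
  shows "(\<lambda>s. lor (f s) (g s)) differentiable (at t within S)"
  using assms unfolding lor_def by (simp add: differentiable_vec_nth)

lemma lor_derivative_eq_0_if_constant_on:
  assumes "open I" "t \<in> I" "\<And>s. s \<in> I \<Longrightarrow> lor (f s) (g s) = c"
    and "(f has_vector_derivative f') (at t)" "(g has_vector_derivative g') (at t)"
  shows "lor f' (g t) + lor (f t) g' = 0"
proof -
  have "((\<lambda>s. lor (f s) (g s)) has_real_derivative 0) (at t)"
    by (rule has_field_derivative_transform_within_open[OF DERIV_const assms(1,2)]) (simp add: assms(3))
  with has_real_derivative_lor[OF assms(4,5)] show ?thesis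
    using DERIV_unique by blast
qed

lemma smooth_on_differentiable:
  assumes "smooth_on I f" "t \<in> I"
  shows "f differentiable (at t)" and "vd f differentiable (at t)"
proof -
  have "((vd ^^ 0) f) differentiable (at t)" "((vd ^^ 1) f) differentiable (at t)"
    using assms unfolding smooth_on_def by blast+
  then show "f differentiable (at t)" and "vd f differentiable (at t)"
    by simp_all
qed

lemma vd_has_vector_derivative:
  "f differentiable (at t) \<Longrightarrow> (f has_vector_derivative vd f t) (at t)"
  by (simp add: vd_def vector_derivative_works[symmetric])

lemma rotated_frame_has_vector_derivative:
  fixes v1 v2 :: "real \<Rightarrow> real^4" and a b :: "real \<Rightarrow> real"
  assumes v1: "(v1 has_vector_derivative n *\<^sub>R v2 t + a t *\<^sub>R u) (at t)"
    and v2: "(v2 has_vector_derivative - n *\<^sub>R v1 t + b t *\<^sub>R u) (at t)"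
    and a: "(a has_real_derivative a') (at t)" and b: "(b has_real_derivative b') (at t)"
    and ab: "(a t)\<^sup>2 + (b t)\<^sup>2 \<noteq> 0"
  defines "A \<equiv> \<lambda>s. sqrt ((a s)\<^sup>2 + (b s)\<^sup>2)"
    and "N \<equiv> (a t * b' - a' * b t + n * ((a t)\<^sup>2 + (b t)\<^sup>2)) / ((a t)\<^sup>2 + (b t)\<^sup>2)"
    and "n1 \<equiv> \<lambda>s. (1 / sqrt ((a s)\<^sup>2 + (b s)\<^sup>2)) *\<^sub>R (a s *\<^sub>R v1 s + b s *\<^sub>R v2 s)"
    and "n2 \<equiv> \<lambda>s. (1 / sqrt ((a s)\<^sup>2 + (b s)\<^sup>2)) *\<^sub>R (- b s *\<^sub>R v1 s + a s *\<^sub>R v2 s)"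
  shows "(A has_real_derivative (a t * a' + b t * b') / A t) (at t)"
    and "(n1 has_vector_derivative N *\<^sub>R n2 t + A t *\<^sub>R u) (at t)"
    and "(n2 has_vector_derivative - N *\<^sub>R n1 t) (at t)"
proof -
  have pos: "0 < (a t)\<^sup>2 + (b t)\<^sup>2"
    using ab sum_power2_ge_zero[of "a t" "b t"] by linarith
  then have A_pos: "A t > 0" and A_sq: "(A t)\<^sup>2 = (a t)\<^sup>2 + (b t)\<^sup>2"
    by (simp_all add: A_def)
  have sq: "((\<lambda>s. (a s)\<^sup>2 + (b s)\<^sup>2) has_real_derivative 2 * (a t * a' + b t * b')) (at t)"
    by (auto intro!: derivative_eq_intros a b)
  show A': "(A has_real_derivative (a t * a' + b t * b') / A t) (at t)"
    unfolding A_def by (rule DERIV_cong[OF DERIV_chain2[OF DERIV_real_sqrt[OF pos] sq]]) (simp add: divide_simps)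
  have A_ne: "A t \<noteq> 0"
    using A_pos by simp
  have A_at: "A s = sqrt ((a s)\<^sup>2 + (b s)\<^sup>2)" for s
    by (simp add: A_def)
  show "(n1 has_vector_derivative N *\<^sub>R n2 t + A t *\<^sub>R u) (at t)"
    unfolding n1_def A_at[symmetric]
    by (rule derivative_eq_intros A' a b v1 v2 A_ne refl)+
      (use A_ne A_sq in \<open>simp add: vec_eq_iff n2_def A_at[symmetric] N_def field_simps
        flip: A_sq; algebra\<close>)
  show "(n2 has_vector_derivative - N *\<^sub>R n1 t) (at t)"
    unfolding n2_def A_at[symmetric]
    by (rule derivative_eq_intros A' a b v1 v2 A_ne refl)+
      (use A_ne A_sq in \<open>simp add: vec_eq_iff n1_def A_at[symmetric] N_def field_simps
        flip: A_sq; algebra\<close>)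
qed

lemma focal_surface_singular_point:
  fixes g n b :: "real \<Rightarrow> real^4" and M A :: "real \<Rightarrow> real"
  assumes g: "(g has_vector_derivative M t *\<^sub>R u) (at t)"
    and n: "(n has_vector_derivative N *\<^sub>R b t + A t *\<^sub>R u) (at t)"
    and b: "(b has_vector_derivative - N *\<^sub>R n t) (at t)"
    and M: "M differentiable (at t)" and A: "A differentiable (at t)"
    and MA: "(A t)\<^sup>2 < (M t)\<^sup>2"
    and \<theta>: "cos \<theta> * (M t * deriv A t - A t * deriv M t) = sin \<theta> * A t * N * sqrt ((M t)\<^sup>2 - (A t)\<^sup>2)"
  shows "singular_point
    (\<lambda>(s, \<phi>). (cos \<phi> / sqrt ((M s)\<^sup>2 - (A s)\<^sup>2)) *\<^sub>R (A s *\<^sub>R g s - M s *\<^sub>R n s) + sin \<phi> *\<^sub>R b s)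
    (t, \<theta>)"
proof -
  define r where "r = sqrt ((M t)\<^sup>2 - (A t)\<^sup>2)"
  have r_pos: "r > 0" and r_sq: "r\<^sup>2 = (M t)\<^sup>2 - (A t)\<^sup>2"
    using MA by (simp_all add: r_def)
  have M': "(M has_real_derivative deriv M t) (at t)" and A': "(A has_real_derivative deriv A t) (at t)"
    using M A by (simp_all add: DERIV_deriv_iff_real_differentiable)
  have sq: "((\<lambda>s. (M s)\<^sup>2 - (A s)\<^sup>2) has_real_derivative 2 * (M t * deriv M t - A t * deriv A t)) (at t)"
    by (auto intro!: derivative_eq_intros M' A')
  define R where "R s = sqrt ((M s)\<^sup>2 - (A s)\<^sup>2)" for s
  have R_t: "R t = r" and R_ne: "R t \<noteq> 0"
    using r_pos by (simp_all add: R_def r_def)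
  have r': "(R has_real_derivative (M t * deriv M t - A t * deriv A t) / r) (at t)"
    unfolding r_def R_def[abs_def]
    by (rule DERIV_cong[OF DERIV_chain2[OF DERIV_real_sqrt sq]]) (use MA in \<open>simp_all add: divide_simps\<close>)
  define F\<theta> where "F\<theta> = (- sin \<theta> / r) *\<^sub>R (A t *\<^sub>R g t - M t *\<^sub>R n t) + cos \<theta> *\<^sub>R b t"
  define K where "K = M t * N / r"
  have "((\<lambda>\<phi>. (cos \<phi> / r) *\<^sub>R (A t *\<^sub>R g t - M t *\<^sub>R n t) + sin \<phi> *\<^sub>R b t) has_vector_derivative F\<theta>) (at \<theta>)"
    unfolding F\<theta>_def using r_pos by (auto intro!: derivative_eq_intros)
  then have F\<theta>: "((\<lambda>\<phi>. (cos \<phi> / sqrt ((M t)\<^sup>2 - (A t)\<^sup>2)) *\<^sub>R (A t *\<^sub>R g t - M t *\<^sub>R n t) + sin \<phi> *\<^sub>R b t)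
      has_vector_derivative F\<theta>) (at \<theta>)"
    by (simp add: r_def)
  have "((\<lambda>s. (cos \<theta> / R s) *\<^sub>R (A s *\<^sub>R g s - M s *\<^sub>R n s) + sin \<theta> *\<^sub>R b s)
      has_vector_derivative - K *\<^sub>R F\<theta>) (at t)"
    by (rule derivative_eq_intros r' M' A' g n b R_ne refl)+
      (use r_pos \<theta> r_sq in \<open>simp add: vec_eq_iff R_t K_def F\<theta>_def field_simps flip: r_def; algebra\<close>)
  then have Ft: "((\<lambda>s. (cos \<theta> / sqrt ((M s)\<^sup>2 - (A s)\<^sup>2)) *\<^sub>R (A s *\<^sub>R g s - M s *\<^sub>R n s) + sin \<theta> *\<^sub>R b s)
      has_vector_derivative - K *\<^sub>R F\<theta>) (at t)"
    by (simp add: R_def)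
  show ?thesis
    unfolding singular_point_def Let_def
    using vector_derivative_at[OF Ft] vector_derivative_at[OF F\<theta>]
    by (intro exI[of _ 1] exI[of _ K]) simp
qed

lemma hyp_framed_curve_frenet:
  assumes I: "open I" and curve: "hyp_framed_curve I \<gamma> v1 v2" and t: "t \<in> I"
  shows "vd \<gamma> t = cm \<gamma> v1 v2 t *\<^sub>R mu \<gamma> v1 v2 t"
    and "vd v1 t = cn \<gamma> v1 v2 t *\<^sub>R v2 t + ca \<gamma> v1 v2 t *\<^sub>R mu \<gamma> v1 v2 t"
    and "vd v2 t = - cn \<gamma> v1 v2 t *\<^sub>R v1 t + cb \<gamma> v1 v2 t *\<^sub>R mu \<gamma> v1 v2 t"
proof -
  have frame: "lor (\<gamma> s) (\<gamma> s) = -1" "lor (v1 s) (v1 s) = 1" "lor (v2 s) (v2 s) = 1"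
    "lor (\<gamma> s) (v1 s) = 0" "lor (\<gamma> s) (v2 s) = 0" "lor (v1 s) (v2 s) = 0" if "s \<in> I" for s
    using curve that unfolding hyp_framed_curve_def H3_def S31_def Delta5_def by auto
  have tangent: "lor (vd \<gamma> t) (v1 t) = 0" "lor (vd \<gamma> t) (v2 t) = 0"
    using curve t unfolding hyp_framed_curve_def by auto
  have D: "(\<gamma> has_vector_derivative vd \<gamma> t) (at t)" "(v1 has_vector_derivative vd v1 t) (at t)"
    "(v2 has_vector_derivative vd v2 t) (at t)"
    using curve t unfolding hyp_framed_curve_def
    by (auto intro: vd_has_vector_derivative smooth_on_differentiable)
  note const = lor_derivative_eq_0_if_constant_on[OF I t]
  have "lor (vd \<gamma> t) (\<gamma> t) = 0"
    using const[OF frame(1) D(1) D(1)] by (simp add: lor_commute)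
  moreover have "lor (vd v1 t) (\<gamma> t) = 0" "lor (vd v1 t) (v1 t) = 0"
    using const[OF frame(4) D(1) D(2)] const[OF frame(2) D(2) D(2)] tangent
    by (simp_all add: lor_commute)
  moreover have "lor (vd v2 t) (\<gamma> t) = 0" "lor (vd v2 t) (v1 t) = - cn \<gamma> v1 v2 t"
    "lor (vd v2 t) (v2 t) = 0"
    using const[OF frame(5) D(1) D(3)] const[OF frame(6) D(2) D(3)] const[OF frame(3) D(3) D(3)]
      tangent
    by (simp_all add: lor_commute cn_def)
  moreover note expand = lor_frame_expansion[OF frame[OF t]]
  ultimately show "vd \<gamma> t = cm \<gamma> v1 v2 t *\<^sub>R mu \<gamma> v1 v2 t"
    and "vd v1 t = cn \<gamma> v1 v2 t *\<^sub>R v2 t + ca \<gamma> v1 v2 t *\<^sub>R mu \<gamma> v1 v2 t"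
    and "vd v2 t = - cn \<gamma> v1 v2 t *\<^sub>R v1 t + cb \<gamma> v1 v2 t *\<^sub>R mu \<gamma> v1 v2 t"
    using expand[of "vd \<gamma> t"] expand[of "vd v1 t"] expand[of "vd v2 t"] tangent
    by (simp_all add: cm_def cn_def ca_def cb_def mu_def)
qed

lemma hyp_framed_curve_curvatures_differentiable:
  assumes "hyp_framed_curve I \<gamma> v1 v2" "t \<in> I"
  shows "cm \<gamma> v1 v2 differentiable (at t)" "ca \<gamma> v1 v2 differentiable (at t)"
    "cb \<gamma> v1 v2 differentiable (at t)"
proof -
  have "\<gamma> differentiable (at t)" "vd \<gamma> differentiable (at t)"
    "v1 differentiable (at t)" "vd v1 differentiable (at t)"
    "v2 differentiable (at t)" "vd v2 differentiable (at t)"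
    using assms unfolding hyp_framed_curve_def by (auto intro: smooth_on_differentiable)
  moreover from this have "mu \<gamma> v1 v2 differentiable (at t)"
    unfolding mu_def[abs_def] by (intro wedge_differentiable)
  ultimately show "cm \<gamma> v1 v2 differentiable (at t)" "ca \<gamma> v1 v2 differentiable (at t)"
    "cb \<gamma> v1 v2 differentiable (at t)"
    unfolding cm_def[abs_def] ca_def[abs_def] cb_def[abs_def] by (simp_all add: lor_differentiable)
qed

lemma focal_dS_singular_point:
  assumes I: "open I" and curve: "hyp_framed_curve I \<gamma> v1 v2" and t: "t \<in> I"
    and ab: "(ca \<gamma> v1 v2 t)\<^sup>2 + (cb \<gamma> v1 v2 t)\<^sup>2 \<noteq> 0"
    and MA: "(cA \<gamma> v1 v2 t)\<^sup>2 < (cM \<gamma> v1 v2 t)\<^sup>2"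
    and \<theta>: "cos \<theta> * (cM \<gamma> v1 v2 t * deriv (cA \<gamma> v1 v2) t - cA \<gamma> v1 v2 t * deriv (cM \<gamma> v1 v2) t)
      = sin \<theta> * cA \<gamma> v1 v2 t * cN \<gamma> v1 v2 t * sqrt ((cM \<gamma> v1 v2 t)\<^sup>2 - (cA \<gamma> v1 v2 t)\<^sup>2)"
  shows "singular_point (focal_dS \<gamma> v1 v2) (t, \<theta>)"
proof -
  note frenet = hyp_framed_curve_frenet[OF I curve t]
  note curvature = hyp_framed_curve_curvatures_differentiable[OF curve t]
  have D: "(\<gamma> has_vector_derivative cM \<gamma> v1 v2 t *\<^sub>R mu \<gamma> v1 v2 t) (at t)"
    "(v1 has_vector_derivative cn \<gamma> v1 v2 t *\<^sub>R v2 t + ca \<gamma> v1 v2 t *\<^sub>R mu \<gamma> v1 v2 t) (at t)"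
    "(v2 has_vector_derivative - cn \<gamma> v1 v2 t *\<^sub>R v1 t + cb \<gamma> v1 v2 t *\<^sub>R mu \<gamma> v1 v2 t) (at t)"
    using curve t frenet unfolding hyp_framed_curve_def cM_def
    by (metis vd_has_vector_derivative smooth_on_differentiable(1))+
  have "(ca \<gamma> v1 v2 has_real_derivative deriv (ca \<gamma> v1 v2) t) (at t)"
    "(cb \<gamma> v1 v2 has_real_derivative deriv (cb \<gamma> v1 v2) t) (at t)"
    using curvature by (simp_all add: DERIV_deriv_iff_real_differentiable)
  note rotated = rotated_frame_has_vector_derivative[OF D(2,3) this ab]
  have "cA \<gamma> v1 v2 differentiable (at t)"
    using rotated(1) unfolding cA_def[abs_def] real_differentiable_def by blast
  moreover have "cM \<gamma> v1 v2 differentiable (at t)"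
    using curvature(1) unfolding cM_def[abs_def] .
  moreover have "(fn1 \<gamma> v1 v2 has_vector_derivative
      cN \<gamma> v1 v2 t *\<^sub>R fn2 \<gamma> v1 v2 t + cA \<gamma> v1 v2 t *\<^sub>R mu \<gamma> v1 v2 t) (at t)"
    "(fn2 \<gamma> v1 v2 has_vector_derivative - cN \<gamma> v1 v2 t *\<^sub>R fn1 \<gamma> v1 v2 t) (at t)"
    unfolding fn1_def[abs_def] fn2_def[abs_def] cA_def cN_def cf_def
    by (fact rotated(2), fact rotated(3))
  ultimately show ?thesis
    unfolding focal_dS_def
    by (intro focal_surface_singular_point[where g = \<gamma> and M = "cM \<gamma> v1 v2" and A = "cA \<gamma> v1 v2"
          and n = "fn1 \<gamma> v1 v2" and b = "fn2 \<gamma> v1 v2" and N = "cN \<gamma> v1 v2 t", OF D(1)] MA \<theta>)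
qed

lemma exists_angle_cos_mult_eq_sin_mult:
  fixes p q :: real
  shows "\<exists>\<theta>\<in>{0..2*pi}. cos \<theta> * p = sin \<theta> * q"
proof (cases "q = 0")
  case True
  then show ?thesis
    by (intro bexI[of _ "pi/2"]) auto
next
  case False
  define \<alpha> where "\<alpha> = arctan (p / q)"
  have "sin \<alpha> = p / q * cos \<alpha>"
    using tan_arctan[of "p / q"] cos_arctan_not_zero[of "p / q"]
    unfolding \<alpha>_def tan_def by (simp add: field_simps)
  then have \<alpha>: "cos \<alpha> * p = sin \<alpha> * q"
    using False by (simp add: field_simps)
  have "- (pi/2) < \<alpha>" "\<alpha> < pi/2"
    unfolding \<alpha>_def using arctan_bounded by auto
  show ?thesis
  proof (cases "\<alpha> \<ge> 0")
    case True
    with \<open>\<alpha> < pi/2\<close> \<alpha> show ?thesis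
      by (intro bexI[of _ \<alpha>]) auto
  next
    case False
    with \<open>- (pi/2) < \<alpha>\<close> \<alpha> show ?thesis
      by (intro bexI[of _ "\<alpha> + pi"]) auto
  qed
qed

theorem mainTheorem3:
  fixes I :: "real set" and \<gamma> v1 v2 :: "real \<Rightarrow> real^4" and t0 :: real
  assumes "open I" and "is_interval I"
    and "hyp_framed_curve I \<gamma> v1 v2"
    and "\<forall>t\<in>I. (ca \<gamma> v1 v2 t)\<^sup>2 + (cb \<gamma> v1 v2 t)\<^sup>2 \<noteq> 0"
    and "\<forall>t\<in>I. (cM \<gamma> v1 v2 t)\<^sup>2 > (cA \<gamma> v1 v2 t)\<^sup>2"
    and "t0 \<in> I"
  shows "((cM \<gamma> v1 v2 t0 * deriv (cA \<gamma> v1 v2) t0 - cA \<gamma> v1 v2 t0 * deriv (cM \<gamma> v1 v2) t0,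
            cN \<gamma> v1 v2 t0) = (0, 0)
          \<longrightarrow> (\<forall>\<theta>\<in>{0..2*pi}. singular_point (focal_dS \<gamma> v1 v2) (t0, \<theta>)))
       \<and> ((cM \<gamma> v1 v2 t0 * deriv (cA \<gamma> v1 v2) t0 - cA \<gamma> v1 v2 t0 * deriv (cM \<gamma> v1 v2) t0,
            cN \<gamma> v1 v2 t0) \<noteq> (0, 0)
          \<longrightarrow> (\<exists>\<theta>0\<in>{0..2*pi}. singular_point (focal_dS \<gamma> v1 v2) (t0, \<theta>0)))"
proof -
  let ?p = "cM \<gamma> v1 v2 t0 * deriv (cA \<gamma> v1 v2) t0 - cA \<gamma> v1 v2 t0 * deriv (cM \<gamma> v1 v2) t0"
  let ?q = "cA \<gamma> v1 v2 t0 * cN \<gamma> v1 v2 t0 * sqrt ((cM \<gamma> v1 v2 t0)\<^sup>2 - (cA \<gamma> v1 v2 t0)\<^sup>2)"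
  have singular: "singular_point (focal_dS \<gamma> v1 v2) (t0, \<theta>)" if "cos \<theta> * ?p = sin \<theta> * ?q" for \<theta>
    using focal_dS_singular_point[OF assms(1,3,6)] assms(4,5,6) that by (simp add: mult.assoc)
  show ?thesis
  proof (intro conjI impI)
    assume "(?p, cN \<gamma> v1 v2 t0) = (0, 0)"
    then show "\<forall>\<theta>\<in>{0..2*pi}. singular_point (focal_dS \<gamma> v1 v2) (t0, \<theta>)"
      by (simp add: singular)
  next
    show "\<exists>\<theta>0\<in>{0..2*pi}. singular_point (focal_dS \<gamma> v1 v2) (t0, \<theta>0)"
      using exists_angle_cos_mult_eq_sin_mult singular by blast
  qed
qed

end
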